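(* Let $\mathfrak{n}$ be the real $7$-dimensional Lie algebra with basis $e_1,\dots,e_7$ whose nonzero brackets (up to antisymmetry) are $[e_1,e_2]=e_4$, $[e_1,e_4]=e_6$, $[e_1,e_5]=-e_7$, $[e_1,e_6]=e_7$, $[e_2,e_3]=e_5$, $[e_2,e_5]=e_7$, $[e_3,e_4]=e_7$. Then $\mathfrak{n}$ is not an Einstein nilradical.
   Context: A real nilpotent Lie algebra $\mathfrak{n}$ is called an Einstein nilradical if it admits an inner product such that the left-invariant Riemannian metric it defines on the simply connected nilpotent Lie group with Lie algebra $\mathfrak{n}$ is a nilsoliton, i.e. its Ricci operator satisfies $\mathrm{Ric}=c\,\mathrm{Id}+D$ for some $c\in\mathbb{R}$ and some derivation $D$ of $\mathfrak{n}$. Brackets of basis elements not listed are zero. *)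

theory Defs
  imports "HOL-Analysis.Analysis"
begin

definition is_inner_product :: "(real^'n \<Rightarrow> real^'n \<Rightarrow> real) \<Rightarrow> bool" where
  "is_inner_product ip \<longleftrightarrow> bilinear ip \<and> (\<forall>x y. ip x y = ip y x) \<and> (\<forall>x. x \<noteq> 0 \<longrightarrow> ip x x > 0)"

text \<open>Levi-Civita connection of the left-invariant metric, on left-invariant fields
  (Koszul formula): 2 ip (nabla_X Y) Z = ip [X,Y] Z - ip [Y,Z] X + ip [Z,X] Y.\<close>

definition levi_civita :: "(real^'n \<Rightarrow> real^'n \<Rightarrow> real^'n) \<Rightarrow> (real^'n \<Rightarrow> real^'n \<Rightarrow> real)
    \<Rightarrow> real^'n \<Rightarrow> real^'n \<Rightarrow> real^'n" where
  "levi_civita B ip X Y =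
     (THE W. \<forall>Z. ip W Z = (ip (B X Y) Z - ip (B Y Z) X + ip (B Z X) Y) / 2)"

definition curvature :: "(real^'n \<Rightarrow> real^'n \<Rightarrow> real^'n) \<Rightarrow> (real^'n \<Rightarrow> real^'n \<Rightarrow> real)
    \<Rightarrow> real^'n \<Rightarrow> real^'n \<Rightarrow> real^'n \<Rightarrow> real^'n" where
  "curvature B ip X Y Z =
     levi_civita B ip X (levi_civita B ip Y Z) - levi_civita B ip Y (levi_civita B ip X Z)
     - levi_civita B ip (B X Y) Z"

definition ricci :: "(real^'n \<Rightarrow> real^'n \<Rightarrow> real^'n) \<Rightarrow> (real^'n \<Rightarrow> real^'n \<Rightarrow> real)
    \<Rightarrow> real^'n \<Rightarrow> real^'n \<Rightarrow> real" where
  "ricci B ip Y Z = (\<Sum>i\<in>UNIV. (curvature B ip (axis i 1) Y Z) $ i)"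

definition is_derivation :: "(real^'n \<Rightarrow> real^'n \<Rightarrow> real^'n) \<Rightarrow> (real^'n \<Rightarrow> real^'n) \<Rightarrow> bool" where
  "is_derivation B D \<longleftrightarrow> linear D \<and> (\<forall>x y. D (B x y) = B (D x) y + B x (D y))"

text \<open>Nilsoliton: Ric = c Id + D for a derivation D, where the Ricci operator Ric is
  defined by ip (Ric Y) Z = ric(Y,Z).\<close>

definition is_nilsoliton :: "(real^'n \<Rightarrow> real^'n \<Rightarrow> real^'n) \<Rightarrow> (real^'n \<Rightarrow> real^'n \<Rightarrow> real) \<Rightarrow> bool" where
  "is_nilsoliton B ip \<longleftrightarrow>
     (\<exists>c D. is_derivation B D \<and> (\<forall>Y Z. ricci B ip Y Z = ip (c *\<^sub>R Y + D Y) Z))"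

definition einstein_nilradical :: "(real^'n \<Rightarrow> real^'n \<Rightarrow> real^'n) \<Rightarrow> bool" where
  "einstein_nilradical B \<longleftrightarrow> (\<exists>ip. is_inner_product ip \<and> is_nilsoliton B ip)"

text \<open>The specific 7-dimensional algebra. Basis vector e_k is the k-th standard basis
  vector (index k taken in the numeral type 7, so e_7 corresponds to index 0).\<close>

definition e7 :: "nat \<Rightarrow> real^7" where
  "e7 k = axis (of_nat k :: 7) 1"

definition br7 :: "nat \<Rightarrow> nat \<Rightarrow> real^7" where
  "br7 a b =
    (if (a,b) = (1,2) then e7 4 else if (a,b) = (2,1) then - e7 4
     else if (a,b) = (1,4) then e7 6 else if (a,b) = (4,1) then - e7 6
     else if (a,b) = (1,5) then - e7 7 else if (a,b) = (5,1) then e7 7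
     else if (a,b) = (1,6) then e7 7 else if (a,b) = (6,1) then - e7 7
     else if (a,b) = (2,3) then e7 5 else if (a,b) = (3,2) then - e7 5
     else if (a,b) = (2,5) then e7 7 else if (a,b) = (5,2) then - e7 7
     else if (a,b) = (3,4) then e7 7 else if (a,b) = (4,3) then - e7 7
     else 0)"

definition bracket7 :: "real^7 \<Rightarrow> real^7 \<Rightarrow> real^7" where
  "bracket7 x y = (\<Sum>a\<in>{1..7}. \<Sum>b\<in>{1..7}. (x \<bullet> e7 a * (y \<bullet> e7 b)) *\<^sub>R br7 a b)"

end

theory Submission
  imports Defs
begin

text \<open>
  Let an inner product make the metric a nilsoliton, \<open>Ric = c Id + D\<close>. Running Gram-Schmidt
  downwards from \<open>e\<^sub>7\<close> gives an orthonormal basis \<open>u\<^sub>1, \<dots>, u\<^sub>7\<close> adapted to the flag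
  \<open>F\<^sub>k = span {e\<^sub>k, \<dots>, e\<^sub>7}\<close>. Every derivation preserves this flag and acts on \<open>F\<^sub>k / F\<^sub>k\<^sub>+\<^sub>1\<close> by
  \<open>t \<cdot> (1,1,2,2,3,3,4)\<^sub>k\<close>; since \<open>D = Ric - c Id\<close> is also symmetric, it is diagonal in the
  basis \<open>u\<close>. The structure constants \<open>C\<^sub>p\<^sub>q\<^sub>r\<close> in this basis vanish unless the flag allows
  \<open>[F\<^sub>p, F\<^sub>q]\<close> to reach \<open>e\<^sub>r\<close>, and \<open>C\<^sub>1\<^sub>2\<^sub>4 \<noteq> 0\<close>. For a nilpotent Lie algebra every weight
  vector \<open>w\<close> satisfies \<open>\<Sum>\<^sub>j w\<^sub>j ric(u\<^sub>j, u\<^sub>j) = \<Sum> C\<^sub>p\<^sub>q\<^sub>r\<^sup>2 (w\<^sub>r - w\<^sub>p - w\<^sub>q) / 4\<close>.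
  If \<open>t \<noteq> 0\<close>, then \<open>C\<^sub>p\<^sub>q\<^sub>r \<noteq> 0\<close> forces \<open>deg r = deg p + deg q\<close>, and the weight
  \<open>(-1, 1, -2, 2, -1, 1, 0)\<close> makes the right side positive while the left side vanishes.
  If \<open>t = 0\<close>, the metric is Einstein and the weights \<open>-1\<close> and \<open>2\<^sup>j\<close> give \<open>c < 0\<close> and \<open>c > 0\<close>.
\<close>

text \<open>Keeps numerals such as \<open>e7 1\<close> from being rewritten to \<open>e7 (Suc 0)\<close>.\<close>

declare One_nat_def [simp del]

lemma atLeastAtMost_1_7: "{1..7::nat} = {1,2,3,4,5,6,7}"
  by auto

lemma ball_1_7: "(\<forall>k\<in>{1..7::nat}. P k) \<longleftrightarrow> P 1 \<and> P 2 \<and> P 3 \<and> P 4 \<and> P 5 \<and> P 6 \<and> P 7"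
  unfolding atLeastAtMost_1_7 by simp

lemma inj_on_of_nat_7: "inj_on (of_nat :: nat \<Rightarrow> 7) {1..7}"
  unfolding inj_on_def atLeastAtMost_1_7 by auto

lemma UNIV_7: "(UNIV :: 7 set) = of_nat ` {1..7}"
proof -
  have "card (of_nat ` {1..7} :: 7 set) = CARD(7)"
    using card_image[OF inj_on_of_nat_7] by simp
  then show ?thesis by (metis card_subset_eq finite subset_UNIV)
qed

lemma e7_inner: "a \<in> {1..7} \<Longrightarrow> b \<in> {1..7} \<Longrightarrow> e7 a \<bullet> e7 b = (if a = b then 1 else 0)"
  using inj_on_of_nat_7 unfolding e7_def inj_on_def by (auto simp: inner_axis_axis)

lemma e7_expansion: "x = (\<Sum>k\<in>{1..7}. (x \<bullet> e7 k) *\<^sub>R e7 k)"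
proof -
  have "x = (\<Sum>i\<in>UNIV. x $ i *\<^sub>R axis i (1::real))"
    using basis_expansion[of x] by (simp add: scalar_mult_eq_scaleR)
  also have "\<dots> = (\<Sum>k\<in>{1..7}. (x \<bullet> e7 k) *\<^sub>R e7 k)"
    unfolding UNIV_7 sum.reindex[OF inj_on_of_nat_7] by (simp add: e7_def inner_axis)
  finally show ?thesis .
qed

lemma linear_inner_e7:
  assumes "linear D"
  shows "D v \<bullet> e7 k = (\<Sum>m\<in>{1..7}. (v \<bullet> e7 m) * (D (e7 m) \<bullet> e7 k))"
  by (subst (1) e7_expansion[of v])
    (simp add: linear_sum[OF assms] linear_scale[OF assms] inner_sum_left)

lemma vector7_eq_iff: "x = y \<longleftrightarrow> (\<forall>k\<in>{1..7}. x \<bullet> e7 k = y \<bullet> e7 k)"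
  by (metis (no_types, lifting) e7_expansion sum.cong)

lemma bilinear_bracket7: "bilinear bracket7"
  unfolding bilinear_def linear_iff bracket7_def
  by (auto simp: inner_add_left scaleR_sum_right sum.distrib scaleR_add_left algebra_simps)

lemma bracket7_e7_e7:
  assumes "a \<in> {1..7}" "b \<in> {1..7}"
  shows "bracket7 (e7 a) (e7 b) = br7 a b"
proof -
  have "bracket7 (e7 a) (e7 b) = (\<Sum>a'\<in>{1..7}. \<Sum>b'\<in>{1..7}. if a' = a \<and> b' = b then br7 a b else 0)"
    unfolding bracket7_def using assms by (intro sum.cong refl) (auto simp: e7_inner)
  also have "\<dots> = (\<Sum>a'\<in>{1..7}. if a' = a then br7 a b else 0)"
    using assms by (intro sum.cong refl) (auto simp: sum.delta')
  also have "\<dots> = br7 a b"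
    using assms by (simp add: sum.delta')
  finally show ?thesis .
qed

lemma inner_bracket7_e7:
  "bracket7 x y \<bullet> e7 1 = 0"
  "bracket7 x y \<bullet> e7 2 = 0"
  "bracket7 x y \<bullet> e7 3 = 0"
  "bracket7 x y \<bullet> e7 4 = x \<bullet> e7 1 * (y \<bullet> e7 2) - x \<bullet> e7 2 * (y \<bullet> e7 1)"
  "bracket7 x y \<bullet> e7 5 = x \<bullet> e7 2 * (y \<bullet> e7 3) - x \<bullet> e7 3 * (y \<bullet> e7 2)"
  "bracket7 x y \<bullet> e7 6 = x \<bullet> e7 1 * (y \<bullet> e7 4) - x \<bullet> e7 4 * (y \<bullet> e7 1)"
  "bracket7 x y \<bullet> e7 7 = x \<bullet> e7 5 * (y \<bullet> e7 1) - x \<bullet> e7 1 * (y \<bullet> e7 5)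
     + x \<bullet> e7 1 * (y \<bullet> e7 6) - x \<bullet> e7 6 * (y \<bullet> e7 1)
     + x \<bullet> e7 2 * (y \<bullet> e7 5) - x \<bullet> e7 5 * (y \<bullet> e7 2)
     + x \<bullet> e7 3 * (y \<bullet> e7 4) - x \<bullet> e7 4 * (y \<bullet> e7 3)"
  unfolding bracket7_def br7_def atLeastAtMost_1_7
  by (simp_all add: inner_sum_left e7_inner algebra_simps)

lemma bracket7_antisym: "bracket7 x y = - bracket7 y x"
  unfolding vector7_eq_iff ball_1_7 by (simp add: inner_bracket7_e7)

section \<open>The flag and the levels of brackets\<close>

definition flag7 :: "nat \<Rightarrow> (real^7) set" where
  "flag7 k = {v. \<forall>j\<in>{1..<k}. v \<bullet> e7 j = 0}"

lemma subspace_flag7: "subspace (flag7 k)"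
  unfolding subspace_def flag7_def by (auto simp: inner_add_left)

lemma flag7_antimono: "k \<le> k' \<Longrightarrow> flag7 k' \<subseteq> flag7 k"
  unfolding flag7_def by auto

lemma e7_in_flag7: "k \<in> {1..7} \<Longrightarrow> e7 k \<in> flag7 k"
  unfolding flag7_def by (auto simp: e7_inner)

text \<open>Read off from \<open>inner_bracket7_e7\<close>: \<open>[F\<^sub>p, F\<^sub>q] \<subseteq> F\<^sub>l\<close> with
  \<open>l = bracket_level7 p q\<close>; the value 8 means that the bracket vanishes.\<close>

definition bracket_level7 :: "nat \<Rightarrow> nat \<Rightarrow> nat" where
  "bracket_level7 p q =
    (if p \<le> 1 \<and> q \<le> 2 \<or> p \<le> 2 \<and> q \<le> 1 then 4
     else if p \<le> 2 \<and> q \<le> 3 \<or> p \<le> 3 \<and> q \<le> 2 then 5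
     else if p \<le> 1 \<and> q \<le> 4 \<or> p \<le> 4 \<and> q \<le> 1 then 6
     else if p \<le> 1 \<and> q \<le> 6 \<or> p \<le> 6 \<and> q \<le> 1 \<or> p \<le> 2 \<and> q \<le> 5 \<or> p \<le> 5 \<and> q \<le> 2
       \<or> p \<le> 3 \<and> q \<le> 4 \<or> p \<le> 4 \<and> q \<le> 3 then 7
     else 8)"

lemma bracket_level7_le: "bracket_level7 p q \<le> 8"
  unfolding bracket_level7_def by simp

lemma bracket_level7_gt: "p \<in> {1..7} \<Longrightarrow> q \<in> {1..7} \<Longrightarrow> p < bracket_level7 p q \<and> q < bracket_level7 p q"
  unfolding atLeastAtMost_1_7 bracket_level7_def by (elim insertE; simp)

lemma bracket7_flag7:
  assumes "p \<in> {1..7}" "q \<in> {1..7}" "x \<in> flag7 p" "y \<in> flag7 q"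
  shows "bracket7 x y \<in> flag7 (bracket_level7 p q)"
proof -
  have x: "x \<bullet> e7 i = 0" if "1 \<le> i" "i < p" for i
    using assms(3) that unfolding flag7_def by auto
  have y: "y \<bullet> e7 i = 0" if "1 \<le> i" "i < q" for i
    using assms(4) that unfolding flag7_def by auto
  have "bracket7 x y \<bullet> e7 k = 0" if "k \<in> {1..<bracket_level7 p q}" for k
  proof -
    have "k \<in> {1..7}" using that bracket_level7_le[of p q] by auto
    with assms(1,2) show ?thesis
      using that x[of 1] x[of 2] x[of 3] x[of 4] x[of 5] x[of 6] y[of 1] y[of 2] y[of 3] y[of 4] y[of 5] y[of 6]
      unfolding atLeastAtMost_1_7 bracket_level7_def by (auto simp: inner_bracket7_e7)
  qed
  then show ?thesis unfolding flag7_def by blast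
qed

section \<open>Derivations\<close>

definition deg7 :: "nat \<Rightarrow> real" where
  "deg7 j = real ((j + 1) div 2)"

lemma derivation7_basis:
  assumes "is_derivation bracket7 D" "a \<in> {1..7}" "b \<in> {1..7}"
  shows "D (br7 a b) \<bullet> e7 k = bracket7 (D (e7 a)) (e7 b) \<bullet> e7 k + bracket7 (e7 a) (D (e7 b)) \<bullet> e7 k"
  using assms unfolding is_derivation_def by (metis bracket7_e7_e7 inner_add_left)

lemma derivation7_triangular:
  assumes D: "is_derivation bracket7 D"
  obtains t where "\<And>j. j \<in> {1..7} \<Longrightarrow> D (e7 j) \<in> flag7 j"
    and "\<And>j. j \<in> {1..7} \<Longrightarrow> D (e7 j) \<bullet> e7 j = t * deg7 j"
proof -
  have lin: "linear D" using D unfolding is_derivation_def by blast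
  define d where "d k j = D (e7 j) \<bullet> e7 k" for k j
  txt \<open>\<open>rel[of a b k]\<close> is the \<open>e\<^sub>k\<close>-coordinate of \<open>D [e\<^sub>a, e\<^sub>b] = [D e\<^sub>a, e\<^sub>b] + [e\<^sub>a, D e\<^sub>b]\<close>,
    a linear relation between the matrix entries \<open>d k j\<close> of \<open>D\<close>.\<close>
  note rel = derivation7_basis[OF D]
  note simps = br7_def inner_bracket7_e7 e7_inner linear_0[OF lin] linear_neg[OF lin] d_def[symmetric]
  have zero: "d 1 2 = 0" "d 2 3 = 0" "d 1 4 = 0" "d 2 4 = 0" "d 3 4 = 0"
    "d 1 5 = 0" "d 2 5 = 0" "d 3 5 = 0" "d 1 6 = 0" "d 2 6 = 0" "d 3 6 = 0" "d 5 6 = 0"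
    "d 1 7 = 0" "d 2 7 = 0" "d 3 7 = 0" "d 4 7 = 0" "d 5 7 = 0" "d 6 7 = 0" "d 2 1 = 0" "d 6 5 = 0"
    using rel[of 2 4 6] rel[of 1 3 4] rel[of 1 2 1] rel[of 1 2 2] rel[of 1 2 3]
      rel[of 2 3 1] rel[of 2 3 2] rel[of 2 3 3] rel[of 1 4 1] rel[of 1 4 2] rel[of 1 4 3] rel[of 1 4 5]
      rel[of 1 5 1] rel[of 1 5 2] rel[of 1 5 3] rel[of 3 4 4] rel[of 1 5 5] rel[of 2 5 6]
      rel[of 1 3 5] rel[of 2 3 6]
    by (simp_all add: simps)
  have chain: "d 4 6 = d 2 4" "d 1 3 = - d 4 6" "d 4 5 = - d 1 3"
    using rel[of 1 4 4] rel[of 3 6 7] rel[of 2 3 4] by (simp_all add: simps)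
  have diag: "d 4 4 = d 1 1 + d 2 2" "d 5 5 = d 2 2 + d 3 3" "d 6 6 = d 1 1 + d 4 4"
    "d 7 7 = d 3 3 + d 4 4" "d 7 7 = d 1 1 - d 2 1 + d 5 5 - d 6 5"
    "d 7 7 = d 1 1 + d 6 6 - d 5 6" "d 7 7 = d 2 2 + d 5 5 - d 1 2"
    using rel[of 1 2 4] rel[of 2 3 5] rel[of 1 4 6] rel[of 3 4 7] rel[of 1 5 7] rel[of 1 6 7] rel[of 2 5 7]
    by (simp_all add: simps)
  have "\<forall>j\<in>{1..7}. D (e7 j) \<in> flag7 j"
    using zero chain by (simp add: flag7_def ball_1_7 atLeastLessThan_nat_numeral d_def[symmetric])
  moreover have "\<forall>j\<in>{1..7}. D (e7 j) \<bullet> e7 j = d 1 1 * deg7 j"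
    using zero diag by (simp add: ball_1_7 deg7_def d_def[symmetric])
  ultimately show thesis using that by blast
qed

lemma derivation7_flag:
  assumes D: "is_derivation bracket7 D"
  obtains t where "\<And>j v. j \<in> {1..7} \<Longrightarrow> v \<in> flag7 j \<Longrightarrow> D v \<in> flag7 j \<and> D v \<bullet> e7 j = t * deg7 j * (v \<bullet> e7 j)"
proof -
  obtain t where tri: "\<And>j. j \<in> {1..7} \<Longrightarrow> D (e7 j) \<in> flag7 j"
    and diag: "\<And>j. j \<in> {1..7} \<Longrightarrow> D (e7 j) \<bullet> e7 j = t * deg7 j"
    by (rule derivation7_triangular[OF D]) auto
  have lin: "linear D" using D unfolding is_derivation_def by blast
  have "D v \<bullet> e7 k = (if k = j then t * deg7 j * (v \<bullet> e7 j) else 0)"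
    if j: "j \<in> {1..7}" and v: "v \<in> flag7 j" and k: "k \<in> {1..j}" for j v k
  proof -
    have "D v \<bullet> e7 k = (\<Sum>m\<in>{1..7}. if m = k then (if k = j then t * deg7 j * (v \<bullet> e7 j) else 0) else 0)"
      unfolding linear_inner_e7[OF lin, of v k]
    proof (intro sum.cong refl)
      fix m :: nat assume m: "m \<in> {1..7}"
      consider "m < j" | "k < m" | "m = k" "k = j"
        using k unfolding atLeastAtMost_iff by linarith
      then show "(v \<bullet> e7 m) * (D (e7 m) \<bullet> e7 k)
          = (if m = k then (if k = j then t * deg7 j * (v \<bullet> e7 j) else 0) else 0)"
      proof cases
        case 1
        then show ?thesis using v m unfolding flag7_def by auto
      next
        case 2
        then show ?thesis using tri[OF m] k unfolding flag7_def by auto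
      next
        case 3
        then show ?thesis using diag[OF j] by (simp add: mult.commute)
      qed
    qed
    also have "\<dots> = (if k = j then t * deg7 j * (v \<bullet> e7 j) else 0)"
      using j k by simp
    finally show ?thesis .
  qed
  then show thesis
    by (intro that) (auto simp: flag7_def)
qed

section \<open>Metric Lie algebras in an orthonormal frame\<close>

locale inner_product_form =
  fixes ip :: "real^'n \<Rightarrow> real^'n \<Rightarrow> real"
  assumes inner_product: "is_inner_product ip"
begin

lemma bilinear_ip: "bilinear ip"
  using inner_product unfolding is_inner_product_def by blast

lemma ip_commute: "ip x y = ip y x"
  using inner_product unfolding is_inner_product_def by blast

lemma ip_self_pos: "x \<noteq> 0 \<Longrightarrow> 0 < ip x x"
  using inner_product unfolding is_inner_product_def by blast

lemma linear_ip_left: "linear (\<lambda>x. ip x y)"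
  using bilinear_ip unfolding bilinear_def by blast

lemma ip_sum_left: "ip (\<Sum>k\<in>S. f k) z = (\<Sum>k\<in>S. ip (f k) z)"
  using linear_sum[OF linear_ip_left] by simp

lemmas ip_simps =
  bilinear_ladd[OF bilinear_ip] bilinear_radd[OF bilinear_ip]
  bilinear_lmul[OF bilinear_ip] bilinear_rmul[OF bilinear_ip]
  bilinear_lneg[OF bilinear_ip] bilinear_rneg[OF bilinear_ip]
  bilinear_lsub[OF bilinear_ip] bilinear_rsub[OF bilinear_ip]
  bilinear_lzero[OF bilinear_ip] bilinear_rzero[OF bilinear_ip]

lemma ip_eqI: "(\<And>z. ip x z = ip y z) \<Longrightarrow> x = y"
  using ip_self_pos[of "x - y"] by (fastforce simp: ip_simps)

end

locale orthonormal_frame = inner_product_form ip for ip :: "real^'n \<Rightarrow> real^'n \<Rightarrow> real" +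
  fixes I :: "'i set" and u :: "'i \<Rightarrow> real^'n"
  assumes orthonormal: "i \<in> I \<Longrightarrow> j \<in> I \<Longrightarrow> ip (u i) (u j) = (if i = j then 1 else 0)"
    and frame_expansion: "v = (\<Sum>k\<in>I. ip v (u k) *\<^sub>R u k)"
begin

lemma finite_frame: "finite I"
proof (rule ccontr)
  assume "infinite I"
  then have "(1 :: real^'n) = 0"
    using frame_expansion[of 1] by simp
  then show False by (simp add: vec_eq_iff)
qed

lemma parseval: "ip v w = (\<Sum>k\<in>I. ip v (u k) * ip w (u k))"
  by (subst frame_expansion) (simp add: ip_sum_left ip_simps ip_commute[of "u _"])

lemma frame_representation:
  assumes "linear f"
  shows "ip (\<Sum>k\<in>I. f (u k) *\<^sub>R u k) z = f z"
proof -
  have "ip (\<Sum>k\<in>I. f (u k) *\<^sub>R u k) z = (\<Sum>k\<in>I. ip z (u k) * f (u k))"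
    by (simp add: ip_sum_left ip_simps ip_commute[of "u _"] mult.commute)
  also have "\<dots> = f (\<Sum>k\<in>I. ip z (u k) *\<^sub>R u k)"
    by (simp add: linear_sum[OF assms] linear_scale[OF assms])
  finally show ?thesis
    using frame_expansion[of z] by simp
qed

lemma frame_eigenvector:
  assumes "j \<in> I" and "\<And>i. i \<in> I \<Longrightarrow> ip x (u i) = (if i = j then a else 0)"
  shows "x = a *\<^sub>R u j"
proof -
  have "x = (\<Sum>i\<in>I. if i = j then a *\<^sub>R u j else 0)"
    using assms(2) by (subst frame_expansion) (intro sum.cong refl, simp)
  also have "\<dots> = a *\<^sub>R u j"
    using assms(1) finite_frame by simp
  finally show ?thesis .
qed

lemma trace_frame:
  assumes "linear L"
  shows "(\<Sum>i\<in>UNIV. L (axis i 1) $ i) = (\<Sum>k\<in>I. ip (L (u k)) (u k))"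
proof -
  have "(\<Sum>i\<in>UNIV. L (axis i 1) $ i) = (\<Sum>i\<in>UNIV. \<Sum>k\<in>I. ip (axis i 1) (u k) * (L (u k) $ i))"
  proof (rule sum.cong[OF refl])
    fix i :: 'n
    have "L (axis i 1) = (\<Sum>k\<in>I. ip (axis i 1) (u k) *\<^sub>R L (u k))"
      by (subst frame_expansion) (simp add: linear_sum[OF assms] linear_scale[OF assms])
    then show "L (axis i 1) $ i = (\<Sum>k\<in>I. ip (axis i 1) (u k) * (L (u k) $ i))"
      by (simp add: sum_component)
  qed
  also have "\<dots> = (\<Sum>k\<in>I. ip (\<Sum>i\<in>UNIV. (L (u k) $ i) *\<^sub>R axis i 1) (u k))"
    by (subst sum.swap) (simp add: ip_sum_left ip_simps mult.commute)
  also have "\<dots> = (\<Sum>k\<in>I. ip (L (u k)) (u k))"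
  proof -
    have "(\<Sum>i\<in>UNIV. x $ i *\<^sub>R axis i 1) = x" for x :: "real^'n"
      using basis_expansion[of x] by (simp add: scalar_mult_eq_scaleR)
    then show ?thesis by (simp only:)
  qed
  finally show ?thesis .
qed

end

locale metric_lie_frame = orthonormal_frame ip I u
    for ip :: "real^'n \<Rightarrow> real^'n \<Rightarrow> real" and I :: "'i set" and u +
  fixes B :: "real^'n \<Rightarrow> real^'n \<Rightarrow> real^'n"
  assumes bilinear_B: "bilinear B"
    and B_antisym: "B x y = - B y x"
begin

lemmas B_simps =
  bilinear_ladd[OF bilinear_B] bilinear_radd[OF bilinear_B]
  bilinear_lmul[OF bilinear_B] bilinear_rmul[OF bilinear_B]

definition koszul :: "real^'n \<Rightarrow> real^'n \<Rightarrow> real^'n \<Rightarrow> real" where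
  "koszul X Y Z = (ip (B X Y) Z - ip (B Y Z) X + ip (B Z X) Y) / 2"

lemma linear_koszul:
  "linear (\<lambda>X. koszul X Y Z)" "linear (\<lambda>Y. koszul X Y Z)" "linear (\<lambda>Z. koszul X Y Z)"
  unfolding linear_iff koszul_def by (auto simp: ip_simps B_simps field_simps)

lemma ip_levi_civita: "ip (levi_civita B ip X Y) Z = koszul X Y Z"
proof -
  define W where "W = (\<Sum>k\<in>I. koszul X Y (u k) *\<^sub>R u k)"
  have W: "ip W Z = koszul X Y Z" for Z
    unfolding W_def by (rule frame_representation[OF linear_koszul(3)])
  have "levi_civita B ip X Y = W"
    unfolding levi_civita_def
  proof (rule the_equality)
    show "\<forall>Z. ip W Z = (ip (B X Y) Z - ip (B Y Z) X + ip (B Z X) Y) / 2"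
      using W unfolding koszul_def by simp
    fix W' assume "\<forall>Z. ip W' Z = (ip (B X Y) Z - ip (B Y Z) X + ip (B Z X) Y) / 2"
    then show "W' = W" by (intro ip_eqI) (simp add: W koszul_def)
  qed
  then show ?thesis using W by simp
qed

lemma levi_civita_linear:
  "linear (\<lambda>X. levi_civita B ip X Y)" "linear (\<lambda>Y. levi_civita B ip X Y)"
proof -
  have "levi_civita B ip (X + X') Y = levi_civita B ip X Y + levi_civita B ip X' Y"
    "levi_civita B ip (c *\<^sub>R X) Y = c *\<^sub>R levi_civita B ip X Y"
    "levi_civita B ip X (Y + Y') = levi_civita B ip X Y + levi_civita B ip X Y'"
    "levi_civita B ip X (c *\<^sub>R Y) = c *\<^sub>R levi_civita B ip X Y" for X X' Y Y' c
    by (rule ip_eqI, simp add: ip_levi_civita ip_simps linear_add[OF linear_koszul(1)]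
        linear_scale[OF linear_koszul(1)] linear_add[OF linear_koszul(2)]
        linear_scale[OF linear_koszul(2)])+
  then show "linear (\<lambda>X. levi_civita B ip X Y)" "linear (\<lambda>Y. levi_civita B ip X Y)"
    unfolding linear_iff by simp_all
qed

lemma ip_levi_civita_skew: "ip (levi_civita B ip X V) W = - ip (levi_civita B ip X W) V"
  unfolding ip_levi_civita koszul_def
  using B_antisym[of V X] B_antisym[of W V] B_antisym[of X W]
  by (simp add: ip_simps field_simps)

lemma ip_curvature:
  "ip (curvature B ip X Y Z) W =
     ip (levi_civita B ip X Z) (levi_civita B ip Y W) - ip (levi_civita B ip Y Z) (levi_civita B ip X W)
     - koszul (B X Y) Z W"
proof -
  have "ip (curvature B ip X Y Z) W = ip (levi_civita B ip X (levi_civita B ip Y Z)) W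
      - ip (levi_civita B ip Y (levi_civita B ip X Z)) W - ip (levi_civita B ip (B X Y) Z) W"
    by (simp add: curvature_def ip_simps)
  then show ?thesis
    by (simp only: ip_levi_civita_skew[of X "levi_civita B ip Y Z"]
        ip_levi_civita_skew[of Y "levi_civita B ip X Z"] ip_levi_civita[of "B X Y"])
      (simp add: ip_commute[of "levi_civita B ip X W"] ip_commute[of "levi_civita B ip Y W"])
qed

lemma linear_curvature: "linear (\<lambda>X. curvature B ip X Y Z)"
  unfolding linear_iff curvature_def
  by (simp add: linear_add[OF levi_civita_linear(1)] linear_scale[OF levi_civita_linear(1)]
      linear_add[OF levi_civita_linear(2)] linear_scale[OF levi_civita_linear(2)]
      B_simps algebra_simps)

lemma ricci_frame: "ricci B ip Y Z = (\<Sum>k\<in>I. ip (curvature B ip (u k) Y Z) (u k))"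
  unfolding ricci_def by (rule trace_frame[OF linear_curvature])

definition struct_const :: "'i \<Rightarrow> 'i \<Rightarrow> 'i \<Rightarrow> real" where
  "struct_const p q r = ip (B (u p) (u q)) (u r)"

definition christoffel :: "'i \<Rightarrow> 'i \<Rightarrow> 'i \<Rightarrow> real" where
  "christoffel p q r = koszul (u p) (u q) (u r)"

lemma christoffel_struct_const:
  "christoffel p q r = (struct_const p q r - struct_const q r p + struct_const r p q) / 2"
  unfolding christoffel_def koszul_def struct_const_def ..

lemma struct_const_antisym: "struct_const p q r = - struct_const q p r"
  unfolding struct_const_def by (subst B_antisym) (simp add: ip_simps)

lemma B_frame_expansion: "B (u p) (u q) = (\<Sum>m\<in>I. struct_const p q m *\<^sub>R u m)"
  unfolding struct_const_def by (rule frame_expansion)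

lemma ricci_frame_struct_const:
  "ricci B ip (u a) (u b) = (\<Sum>i\<in>I. \<Sum>m\<in>I.
     christoffel i b m * christoffel a i m - christoffel a b m * christoffel i i m
     - struct_const i a m * christoffel m b i)"
proof -
  have "ip (curvature B ip (u i) (u a) (u b)) (u i) = (\<Sum>m\<in>I.
     christoffel i b m * christoffel a i m - christoffel a b m * christoffel i i m
     - struct_const i a m * christoffel m b i)" for i
  proof -
    have "ip (levi_civita B ip (u i) (u b)) (levi_civita B ip (u a) (u i))
        = (\<Sum>m\<in>I. christoffel i b m * christoffel a i m)"
      "ip (levi_civita B ip (u a) (u b)) (levi_civita B ip (u i) (u i))
        = (\<Sum>m\<in>I. christoffel a b m * christoffel i i m)"
      by (subst parseval, simp add: ip_levi_civita christoffel_def)+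
    moreover have "koszul (B (u i) (u a)) (u b) (u i) = (\<Sum>m\<in>I. struct_const i a m * christoffel m b i)"
      unfolding B_frame_expansion christoffel_def
      by (simp add: linear_sum[OF linear_koszul(1)] linear_scale[OF linear_koszul(1)])
    ultimately show ?thesis
      by (simp add: ip_curvature sum_subtractf)
  qed
  then show ?thesis unfolding ricci_frame by simp
qed

lemma struct_const_derivation_eigen:
  assumes "is_derivation B D" and eigen: "\<And>m. m \<in> I \<Longrightarrow> D (u m) = ev m *\<^sub>R u m"
    and "p \<in> I" "q \<in> I" "r \<in> I"
  shows "struct_const p q r * (ev r - ev p - ev q) = 0"
proof -
  have lin: "linear D" and leibniz: "D (B (u p) (u q)) = B (D (u p)) (u q) + B (u p) (D (u q))"
    using assms(1) unfolding is_derivation_def by blast+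
  have "ip (D (B (u p) (u q))) (u r) = (ev p + ev q) * struct_const p q r"
    unfolding leibniz using assms(3,4)
    by (simp add: eigen B_simps ip_simps struct_const_def algebra_simps)
  moreover have "ip (D (B (u p) (u q))) (u r) = struct_const p q r * ev r"
  proof -
    have "ip (D (B (u p) (u q))) (u r) = (\<Sum>m\<in>I. struct_const p q m * ev m * ip (u m) (u r))"
      unfolding B_frame_expansion
      by (simp add: linear_sum[OF lin] linear_scale[OF lin] eigen ip_sum_left ip_simps cong: sum.cong)
    also have "\<dots> = (\<Sum>m\<in>I. if m = r then struct_const p q r * ev r else 0)"
      using assms(5) by (intro sum.cong) (auto simp: orthonormal)
    also have "\<dots> = struct_const p q r * ev r"
      using assms(5) finite_frame by simp
    finally show ?thesis .
  qed
  ultimately show ?thesis by (simp add: algebra_simps)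
qed

end

section \<open>Ricci curvature of a nilpotent frame\<close>

lemma ricci_sum_triangular:
  fixes C G :: "'i::linorder \<Rightarrow> 'i \<Rightarrow> 'i \<Rightarrow> real"
  assumes anti: "\<And>p q r. C p q r = - C q p r"
    and triangular: "\<And>p q r. p \<in> S \<Longrightarrow> q \<in> S \<Longrightarrow> r \<in> S \<Longrightarrow> C p q r \<noteq> 0 \<Longrightarrow> p < r \<and> q < r"
    and a: "a \<in> S" and b: "b \<in> S"
    and G: "\<And>p q r. G p q r = (C p q r - C q r p + C r p q) / 2"
  shows "(\<Sum>i\<in>S. \<Sum>m\<in>S. G i b m * G a i m - G a b m * G i i m - C i a m * G m b i)
       = (\<Sum>i\<in>S. \<Sum>m\<in>S. C m i a * C m i b / 4 - C i a m * C i b m / 2)"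
proof -
  txt \<open>Triangularity kills the terms of the general formula that involve the Killing form
    and the mean curvature vector; what remains besides the two standard terms is the
    antisymmetric array \<open>h i m - h m i\<close>, which sums to zero.\<close>
  define h where "h i m = (C i b m * C a i m + C i b m * C m i a - C m i b * C a i m) / 4" for i m
  have pointwise: "G i b m * G a i m - G a b m * G i i m - C i a m * G m b i
      = C m i a * C m i b / 4 - C i a m * C i b m / 2 + (h i m - h m i)"
    if i: "i \<in> S" and m: "m \<in> S" for i m
  proof -
    have "C x x z = 0" for x z using anti[of x x z] by simp
    moreover have "C i m i = 0" using triangular[OF i m i] by auto
    moreover have "C a m i = 0 \<or> C b i m = 0" "C a i m = 0 \<or> C b m i = 0"
      using triangular[OF a m i] triangular[OF b i m] triangular[OF a i m] triangular[OF b m i]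
      by (metis less_asym)+
    moreover have "C b a z = - C a b z" "C i a z = - C a i z" "C m a z = - C a m z"
      "C i b z = - C b i z" "C m b z = - C b m z" "C m i z = - C i m z" for z
      by (rule anti)+
    ultimately show ?thesis
      unfolding G h_def by (elim disjE) (simp_all add: field_simps)
  qed
  have "(\<Sum>i\<in>S. \<Sum>m\<in>S. G i b m * G a i m - G a b m * G i i m - C i a m * G m b i)
     = (\<Sum>i\<in>S. \<Sum>m\<in>S. C m i a * C m i b / 4 - C i a m * C i b m / 2)
       + ((\<Sum>i\<in>S. \<Sum>m\<in>S. h i m) - (\<Sum>i\<in>S. \<Sum>m\<in>S. h m i))"
    by (simp add: pointwise sum.distrib sum_subtractf cong: sum.cong)
  also have "(\<Sum>i\<in>S. \<Sum>m\<in>S. h m i) = (\<Sum>i\<in>S. \<Sum>m\<in>S. h i m)"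
    by (rule sum.swap)
  finally show ?thesis by simp
qed

lemma weighted_ricci_sum:
  fixes C :: "'i \<Rightarrow> 'i \<Rightarrow> 'i \<Rightarrow> real"
  assumes anti: "\<And>p q r. C p q r = - C q p r"
  shows "(\<Sum>j\<in>S. w j * (\<Sum>i\<in>S. \<Sum>m\<in>S. C m i j * C m i j / 4 - C i j m * C i j m / 2))
     = (\<Sum>p\<in>S. \<Sum>q\<in>S. \<Sum>r\<in>S. (C p q r)\<^sup>2 * (w r - w p - w q) / 4)"
proof -
  define T where "T f = (\<Sum>p\<in>S. \<Sum>q\<in>S. \<Sum>r\<in>S. f p q r * (C p q r)\<^sup>2)" for f
  have outer: "(\<Sum>j\<in>S. \<Sum>i\<in>S. \<Sum>m\<in>S. w j * (C m i j)\<^sup>2) = T (\<lambda>p q r. w r)"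
    unfolding T_def by (subst sum.swap, subst (1 2) sum.swap) (rule refl)
  have inner: "(\<Sum>j\<in>S. \<Sum>i\<in>S. \<Sum>m\<in>S. w j * (C i j m)\<^sup>2) = T (\<lambda>p q r. w q)"
    unfolding T_def by (subst sum.swap) simp
  have swap: "T (\<lambda>p q r. w q) = T (\<lambda>p q r. w p)"
  proof -
    have "(C q p r)\<^sup>2 = (C p q r)\<^sup>2" for p q r
      using anti[of q p r] by simp
    then show ?thesis unfolding T_def by (subst sum.swap) simp
  qed
  have "(\<Sum>j\<in>S. w j * (\<Sum>i\<in>S. \<Sum>m\<in>S. C m i j * C m i j / 4 - C i j m * C i j m / 2))
      = (\<Sum>j\<in>S. \<Sum>i\<in>S. \<Sum>m\<in>S. w j * (C m i j)\<^sup>2) / 4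
        - (\<Sum>j\<in>S. \<Sum>i\<in>S. \<Sum>m\<in>S. w j * (C i j m)\<^sup>2) / 2"
    by (simp add: sum_distrib_left sum_subtractf sum_divide_distrib power2_eq_square right_diff_distrib)
  also have "\<dots> = (T (\<lambda>p q r. w r) - T (\<lambda>p q r. w p) - T (\<lambda>p q r. w q)) / 4"
    unfolding outer inner swap by simp
  also have "\<dots> = (\<Sum>p\<in>S. \<Sum>q\<in>S. \<Sum>r\<in>S. (C p q r)\<^sup>2 * (w r - w p - w q) / 4)"
    unfolding T_def by (simp add: sum_subtractf[symmetric] sum_divide_distrib algebra_simps)
  finally show ?thesis .
qed

lemma triple_sum_pos:
  fixes f :: "'i \<Rightarrow> 'i \<Rightarrow> 'i \<Rightarrow> real"
  assumes "finite S" and nonneg: "\<And>p q r. p \<in> S \<Longrightarrow> q \<in> S \<Longrightarrow> r \<in> S \<Longrightarrow> 0 \<le> f p q r"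
    and "x \<in> S" "y \<in> S" "z \<in> S" and "0 < f x y z"
  shows "0 < (\<Sum>p\<in>S. \<Sum>q\<in>S. \<Sum>r\<in>S. f p q r)"
proof -
  have "f x y z \<le> (\<Sum>r\<in>S. f x y r)"
    using assms by (intro member_le_sum) auto
  also have "\<dots> \<le> (\<Sum>q\<in>S. \<Sum>r\<in>S. f x q r)"
    using assms by (intro member_le_sum[of y S "\<lambda>q. \<Sum>r\<in>S. f x q r"] sum_nonneg) auto
  also have "\<dots> \<le> (\<Sum>p\<in>S. \<Sum>q\<in>S. \<Sum>r\<in>S. f p q r)"
    using assms by (intro member_le_sum[of x S "\<lambda>p. \<Sum>q\<in>S. \<Sum>r\<in>S. f p q r"] sum_nonneg) auto
  finally show ?thesis using assms(6) by simp
qed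

section \<open>A frame adapted to the flag\<close>

locale inner_product7 = inner_product_form ip for ip :: "real^7 \<Rightarrow> real^7 \<Rightarrow> real"
begin

text \<open>The state of Gram-Schmidt run downwards from \<open>e\<^sub>7\<close> after it has produced \<open>u s, \<dots>, u 7\<close>.\<close>

definition adapted_from :: "nat \<Rightarrow> (nat \<Rightarrow> real^7) \<Rightarrow> bool" where
  "adapted_from s u \<longleftrightarrow>
     (\<forall>i\<in>{s..7}. \<forall>j\<in>{s..7}. ip (u i) (u j) = (if i = j then 1 else 0)) \<and>
     (\<forall>k\<in>{s..7}. u k \<in> flag7 k \<and> e7 k = (\<Sum>m\<in>{k..7}. ip (e7 k) (u m) *\<^sub>R u m))"

lemma gram_schmidt_vector:
  assumes s: "s \<in> {1..7}"
    and orth: "\<And>i j. i \<in> {Suc s..7} \<Longrightarrow> j \<in> {Suc s..7} \<Longrightarrow> ip (u i) (u j) = (if i = j then 1 else 0)"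
    and flag: "\<And>k. k \<in> {Suc s..7} \<Longrightarrow> u k \<in> flag7 k"
  obtains v where "ip v v = 1" "\<And>m. m \<in> {Suc s..7} \<Longrightarrow> ip v (u m) = 0" "v \<in> flag7 s"
    "e7 s = ip (e7 s) v *\<^sub>R v + (\<Sum>m\<in>{Suc s..7}. ip (e7 s) (u m) *\<^sub>R u m)"
proof -
  define P where "P = (\<Sum>m\<in>{Suc s..7}. ip (e7 s) (u m) *\<^sub>R u m)"
  define w where "w = e7 s - P"
  define n where "n = sqrt (ip w w)"
  have P_flag: "P \<in> flag7 (Suc s)"
    unfolding P_def using flag flag7_antimono
    by (intro subspace_sum[OF subspace_flag7] subspace_scale[OF subspace_flag7]) auto
  then have "w \<bullet> e7 s = 1"
    using s unfolding w_def flag7_def by (simp add: inner_diff_left e7_inner)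
  then have "w \<noteq> 0" by auto
  then have w_pos: "0 < ip w w" by (rule ip_self_pos)
  then have n: "0 < n" "n * n = ip w w"
    unfolding n_def by (simp_all add: real_sqrt_mult[symmetric])
  have w_orth: "ip w (u m) = 0" if "m \<in> {Suc s..7}" for m
  proof -
    have "ip P (u m) = (\<Sum>m'\<in>{Suc s..7}. if m' = m then ip (e7 s) (u m) else 0)"
      unfolding P_def ip_sum_left using that by (intro sum.cong refl) (simp add: ip_simps orth)
    then show ?thesis using that unfolding w_def by (simp add: ip_simps)
  qed
  define v where "v = (1 / n) *\<^sub>R w"
  have v_orth: "ip v (u m) = 0" if "m \<in> {Suc s..7}" for m
    unfolding v_def using w_orth[OF that] by (simp add: ip_simps)
  have "ip (e7 s) v = ip w v + ip P v"
    unfolding w_def by (simp add: ip_simps)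
  moreover have "ip P v = 0"
    unfolding P_def ip_sum_left using v_orth by (simp add: ip_simps ip_commute[of "u _"])
  moreover have "ip w v = n"
    unfolding v_def using n by (simp add: ip_simps field_simps)
  ultimately have "e7 s = ip (e7 s) v *\<^sub>R v + P"
    unfolding v_def w_def using n by simp
  moreover have "ip v v = 1"
    unfolding v_def using n w_pos by (simp add: ip_simps)
  moreover have "v \<in> flag7 s"
    unfolding v_def w_def using P_flag flag7_antimono[of s "Suc s"] e7_in_flag7[OF s]
    by (intro subspace_scale[OF subspace_flag7] subspace_diff[OF subspace_flag7]) auto
  ultimately show thesis
    using that v_orth unfolding P_def by blast
qed

lemma adapted_from_step:
  assumes s: "s \<in> {1..7}" and adapted: "adapted_from (Suc s) u"
  obtains v where "adapted_from s (u(s := v))"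
proof -
  have orth: "\<And>i j. i \<in> {Suc s..7} \<Longrightarrow> j \<in> {Suc s..7} \<Longrightarrow> ip (u i) (u j) = (if i = j then 1 else 0)"
    and flag: "\<And>k. k \<in> {Suc s..7} \<Longrightarrow> u k \<in> flag7 k"
    and expansion: "\<And>k. k \<in> {Suc s..7} \<Longrightarrow> e7 k = (\<Sum>m\<in>{k..7}. ip (e7 k) (u m) *\<^sub>R u m)"
    using adapted unfolding adapted_from_def by auto
  obtain v where v_unit: "ip v v = 1" and v_orth: "\<And>m. m \<in> {Suc s..7} \<Longrightarrow> ip v (u m) = 0"
    and v_flag: "v \<in> flag7 s"
    and e7_s: "e7 s = ip (e7 s) v *\<^sub>R v + (\<Sum>m\<in>{Suc s..7}. ip (e7 s) (u m) *\<^sub>R u m)"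
    by (rule gram_schmidt_vector[OF s orth flag]) auto
  have "adapted_from s (u(s := v))"
    unfolding adapted_from_def
  proof (intro conjI ballI)
    fix i j assume i: "i \<in> {s..7}" and j: "j \<in> {s..7}"
    show "ip ((u(s := v)) i) ((u(s := v)) j) = (if i = j then 1 else 0)"
    proof (cases "i = s"; cases "j = s")
      assume "i \<noteq> s" "j = s"
      then show ?thesis using v_orth[of i] i by (simp add: ip_commute)
    qed (use v_unit v_orth orth i j in auto)
  next
    fix k assume k: "k \<in> {s..7}"
    show "(u(s := v)) k \<in> flag7 k"
      using k v_flag flag by (cases "k = s") auto
    show "e7 k = (\<Sum>m\<in>{k..7}. ip (e7 k) ((u(s := v)) m) *\<^sub>R (u(s := v)) m)"
    proof (cases "k = s")
      case True
      have "{s..7} = insert s {Suc s..7}" using s by auto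
      then show ?thesis using True e7_s by simp
    next
      case False
      then show ?thesis using k expansion[of k] by (auto intro: sum.cong)
    qed
  qed
  then show thesis by (rule that)
qed

lemma adapted_from_exists: "\<exists>u. adapted_from 1 u"
proof -
  have "\<exists>u. adapted_from (8 - n) u" if "n \<le> 7" for n
    using that
  proof (induction n)
    case 0
    show ?case by (simp add: adapted_from_def)
  next
    case (Suc n)
    then obtain u where u: "adapted_from (Suc (7 - n)) u"
      by (auto simp: Suc_diff_le numeral_eq_Suc)
    have "7 - n \<in> {1..7}" using Suc.prems by auto
    then obtain v where "adapted_from (7 - n) (u(7 - n := v))"
      using u by (rule adapted_from_step)
    then show ?case by auto
  qed
  from this[of 7] show ?thesis by (simp add: One_nat_def)
qed

end

locale adapted_frame7 = inner_product7 +
  fixes u :: "nat \<Rightarrow> real^7"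
  assumes adapted: "adapted_from 1 u"
begin

lemma frame_in_flag7: "k \<in> {1..7} \<Longrightarrow> u k \<in> flag7 k"
  using adapted unfolding adapted_from_def by blast

lemma ip_e7_frame_below:
  assumes "j \<in> {1..7}" "r \<in> {1..7}" "r < j"
  shows "ip (e7 j) (u r) = 0"
proof -
  have expansion: "e7 j = (\<Sum>m\<in>{j..7}. ip (e7 j) (u m) *\<^sub>R u m)"
    using adapted assms(1) unfolding adapted_from_def by blast
  have "ip (e7 j) (u r) = (\<Sum>m\<in>{j..7}. ip (e7 j) (u m) * ip (u m) (u r))"
    by (subst (1) expansion) (simp add: ip_sum_left ip_simps)
  also have "\<dots> = 0"
    using adapted assms unfolding adapted_from_def by (intro sum.neutral) auto
  finally show ?thesis .
qed

sublocale metric_lie_frame ip "{1..7}" u bracket7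
proof
  show "ip (u i) (u j) = (if i = j then 1 else 0)" if "i \<in> {1..7}" "j \<in> {1..7}" for i j
    using adapted that unfolding adapted_from_def by auto
  have e7_frame: "e7 k = (\<Sum>m\<in>{1..7}. ip (e7 k) (u m) *\<^sub>R u m)" if "k \<in> {1..7}" for k
  proof -
    have "(\<Sum>m\<in>{1..7}. ip (e7 k) (u m) *\<^sub>R u m) = (\<Sum>m\<in>{k..7}. ip (e7 k) (u m) *\<^sub>R u m)"
      using that by (intro sum.mono_neutral_right) (auto simp: ip_e7_frame_below)
    then show ?thesis using adapted that unfolding adapted_from_def by auto
  qed
  show "v = (\<Sum>m\<in>{1..7}. ip v (u m) *\<^sub>R u m)" for v
  proof -
    have "(\<Sum>m\<in>{1..7}. ip v (u m) *\<^sub>R u m)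
        = (\<Sum>m\<in>{1..7}. \<Sum>j\<in>{1..7}. ((v \<bullet> e7 j) * ip (e7 j) (u m)) *\<^sub>R u m)"
      by (subst (1) e7_expansion[of v]) (simp add: ip_sum_left ip_simps scaleR_sum_left)
    also have "\<dots> = (\<Sum>j\<in>{1..7}. (v \<bullet> e7 j) *\<^sub>R (\<Sum>m\<in>{1..7}. ip (e7 j) (u m) *\<^sub>R u m))"
      by (subst sum.swap) (simp add: scaleR_sum_right)
    also have "\<dots> = (\<Sum>j\<in>{1..7}. (v \<bullet> e7 j) *\<^sub>R e7 j)"
      using e7_frame by (intro sum.cong) simp_all
    finally show ?thesis using e7_expansion[of v] by simp
  qed
  show "bilinear bracket7" by (rule bilinear_bracket7)
  show "bracket7 x y = - bracket7 y x" for x y by (rule bracket7_antisym)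
qed

lemma ip_flag7_frame:
  assumes v: "v \<in> flag7 s" and r: "r \<in> {1..7}" "r \<le> s"
  shows "ip v (u r) = (if r = s then (v \<bullet> e7 s) * ip (e7 s) (u s) else 0)"
proof -
  have "ip v (u r) = (\<Sum>j\<in>{1..7}. (v \<bullet> e7 j) * ip (e7 j) (u r))"
    by (subst (1) e7_expansion[of v]) (simp add: ip_sum_left ip_simps)
  also have "\<dots> = (\<Sum>j\<in>{1..7}. if j = r then (if r = s then (v \<bullet> e7 s) * ip (e7 s) (u s) else 0) else 0)"
  proof (intro sum.cong refl)
    fix j :: nat assume j: "j \<in> {1..7}"
    consider "j < s" | "r < j" | "j = r" "r = s"
      using r by linarith
    then show "(v \<bullet> e7 j) * ip (e7 j) (u r)
        = (if j = r then (if r = s then (v \<bullet> e7 s) * ip (e7 s) (u s) else 0) else 0)"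
    proof cases
      case 1
      then show ?thesis using v j r unfolding flag7_def by auto
    qed (use j r ip_e7_frame_below in auto)
  qed
  also have "\<dots> = (if r = s then (v \<bullet> e7 s) * ip (e7 s) (u s) else 0)"
    using r by simp
  finally show ?thesis .
qed

lemma frame_diag_coord: "k \<in> {1..7} \<Longrightarrow> (u k \<bullet> e7 k) * ip (e7 k) (u k) = 1"
  using ip_flag7_frame[OF frame_in_flag7 _ order_refl, of k] orthonormal[of k k] by simp

lemma struct_const_level:
  assumes pqr: "p \<in> {1..7}" "q \<in> {1..7}" "r \<in> {1..7}" and "struct_const p q r \<noteq> 0"
  shows "bracket_level7 p q \<le> r"
proof (rule ccontr)
  assume "\<not> bracket_level7 p q \<le> r"
  then have "struct_const p q r = 0"
    using ip_flag7_frame[OF bracket7_flag7[OF pqr(1,2) frame_in_flag7[OF pqr(1)] frame_in_flag7[OF pqr(2)]] pqr(3)]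
    unfolding struct_const_def by simp
  with assms(4) show False by contradiction
qed

lemma struct_const_triangular:
  assumes "p \<in> {1..7}" "q \<in> {1..7}" "r \<in> {1..7}" "struct_const p q r \<noteq> 0"
  shows "p < r \<and> q < r"
  using struct_const_level[OF assms] bracket_level7_gt[OF assms(1,2)] by linarith

lemma struct_const_1_2_4: "struct_const 1 2 4 \<noteq> 0"
proof -
  have "bracket7 (u 1) (u 2) \<in> flag7 4"
    using bracket7_flag7[of 1 2 "u 1" "u 2"] frame_in_flag7 by (simp add: bracket_level7_def)
  moreover have "u 2 \<bullet> e7 1 = 0"
    using frame_in_flag7[of 2] unfolding flag7_def by auto
  ultimately have "struct_const 1 2 4 = (u 1 \<bullet> e7 1) * (u 2 \<bullet> e7 2) * ip (e7 4) (u 4)"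
    unfolding struct_const_def by (simp add: ip_flag7_frame inner_bracket7_e7)
  then show ?thesis
    using frame_diag_coord[of 1] frame_diag_coord[of 2] frame_diag_coord[of 4] by auto
qed

lemma ricci_frame7:
  assumes "a \<in> {1..7}" "b \<in> {1..7}"
  shows "ricci bracket7 ip (u a) (u b) = (\<Sum>i\<in>{1..7}. \<Sum>m\<in>{1..7}.
    struct_const m i a * struct_const m i b / 4 - struct_const i a m * struct_const i b m / 2)"
  unfolding ricci_frame_struct_const
  by (rule ricci_sum_triangular[OF struct_const_antisym struct_const_triangular assms christoffel_struct_const])

lemma ricci_frame7_sym:
  "a \<in> {1..7} \<Longrightarrow> b \<in> {1..7} \<Longrightarrow> ricci bracket7 ip (u a) (u b) = ricci bracket7 ip (u b) (u a)"
  by (simp add: ricci_frame7 mult.commute)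

lemma weighted_ricci_pos:
  assumes "\<And>p q r. p \<in> {1..7} \<Longrightarrow> q \<in> {1..7} \<Longrightarrow> r \<in> {1..7} \<Longrightarrow> struct_const p q r \<noteq> 0
      \<Longrightarrow> 0 \<le> w r - w p - w q"
    and "0 < w 4 - w 1 - w 2"
  shows "0 < (\<Sum>j\<in>{1..7}. w j * ricci bracket7 ip (u j) (u j))"
proof -
  have "(\<Sum>j\<in>{1..7}. w j * ricci bracket7 ip (u j) (u j)) = (\<Sum>j\<in>{1..7}. w j * (\<Sum>i\<in>{1..7}. \<Sum>m\<in>{1..7}.
      struct_const m i j * struct_const m i j / 4 - struct_const i j m * struct_const i j m / 2))"
    by (intro sum.cong refl) (simp add: ricci_frame7)
  also have "\<dots> = (\<Sum>p\<in>{1..7}. \<Sum>q\<in>{1..7}. \<Sum>r\<in>{1..7}. (struct_const p q r)\<^sup>2 * (w r - w p - w q) / 4)"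
    by (rule weighted_ricci_sum[OF struct_const_antisym])
  also have "0 < \<dots>"
  proof (rule triple_sum_pos[of _ _ 1 2 4])
    show "0 \<le> (struct_const p q r)\<^sup>2 * (w r - w p - w q) / 4"
      if "p \<in> {1..7}" "q \<in> {1..7}" "r \<in> {1..7}" for p q r
      using assms(1)[OF that] by (cases "struct_const p q r = 0") auto
  qed (use assms(2) struct_const_1_2_4 in auto)
  finally show ?thesis .
qed

lemma nilsoliton_frame_eigen:
  assumes D: "is_derivation bracket7 D"
    and ric: "\<And>Y Z. ricci bracket7 ip Y Z = ip (c *\<^sub>R Y + D Y) Z"
  obtains t where "\<And>j. j \<in> {1..7} \<Longrightarrow> D (u j) = (t * deg7 j) *\<^sub>R u j"
proof -
  obtain t where flagD: "\<And>j v. j \<in> {1..7} \<Longrightarrow> v \<in> flag7 j \<Longrightarrow> D v \<in> flag7 j \<and> D v \<bullet> e7 j = t * deg7 j * (v \<bullet> e7 j)"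
    by (rule derivation7_flag[OF D]) auto
  have ricci_D: "ricci bracket7 ip (u i) (u j) = c * (if i = j then 1 else 0) + ip (D (u i)) (u j)"
    if "i \<in> {1..7}" "j \<in> {1..7}" for i j
    using that by (simp add: ric ip_simps orthonormal)
  have below: "ip (D (u j)) (u i) = 0" if "i \<in> {1..7}" "j \<in> {1..7}" "i < j" for i j
    using that ip_flag7_frame[of "D (u j)" j i] flagD frame_in_flag7 by simp
  have entry: "ip (D (u j)) (u i) = (if i = j then t * deg7 j else 0)"
    if i: "i \<in> {1..7}" and j: "j \<in> {1..7}" for i j
  proof (cases i j rule: linorder_cases)
    case less
    then show ?thesis using below[OF i j] by simp
  next
    case equal
    then show ?thesis
      using ip_flag7_frame[of "D (u j)" j j] flagD[OF j frame_in_flag7[OF j]] frame_diag_coord[OF j] j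
      by simp
  next
    case greater
    then have "ip (D (u j)) (u i) = ip (D (u i)) (u j)"
      using ricci_D[OF i j] ricci_D[OF j i] ricci_frame7_sym[OF i j] by simp
    then show ?thesis using below[OF j i] greater by simp
  qed
  have "D (u j) = (t * deg7 j) *\<^sub>R u j" if "j \<in> {1..7}" for j
    using that entry by (intro frame_eigenvector) auto
  then show thesis by (rule that)
qed

end

section \<open>The obstruction\<close>

text \<open>A weight orthogonal to \<open>(1, \<dots>, 1)\<close> and to \<open>deg7\<close> that still satisfies
  \<open>w r \<ge> w p + w q\<close> on every triple allowed by the bracket levels and the grading;
  index 0 is padding.\<close>

definition test_weight7 :: "nat \<Rightarrow> real" where
  "test_weight7 j = [0, -1, 1, -2, 2, -1, 1, 0] ! j"

lemma test_weight7_admissible: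
  "p \<in> {1..7} \<Longrightarrow> q \<in> {1..7} \<Longrightarrow> r \<in> {1..7} \<Longrightarrow> bracket_level7 p q \<le> r
    \<Longrightarrow> deg7 r = deg7 p + deg7 q \<Longrightarrow> 0 \<le> test_weight7 r - test_weight7 p - test_weight7 q"
  unfolding atLeastAtMost_1_7 by (elim insertE; simp add: bracket_level7_def deg7_def test_weight7_def)

lemma power2_weight_admissible:
  "p \<in> {1..7} \<Longrightarrow> q \<in> {1..7} \<Longrightarrow> r \<in> {1..7} \<Longrightarrow> bracket_level7 p q \<le> r
    \<Longrightarrow> p \<noteq> q \<Longrightarrow> 0 \<le> (2::real) ^ r - 2 ^ p - 2 ^ q"
  unfolding atLeastAtMost_1_7 by (elim insertE; simp add: bracket_level7_def)

lemma (in adapted_frame7) ricci_frame7_not_constant: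
  assumes "\<And>j. j \<in> {1..7} \<Longrightarrow> ricci bracket7 ip (u j) (u j) = c"
  shows False
proof -
  have "0 < (\<Sum>j\<in>{1..7}. (- 1) * ricci bracket7 ip (u j) (u j))"
    by (rule weighted_ricci_pos) auto
  moreover have "0 < (\<Sum>j\<in>{1..7}. 2 ^ j * ricci bracket7 ip (u j) (u j))"
  proof (rule weighted_ricci_pos)
    fix p q r assume pqr: "p \<in> {1..7}" "q \<in> {1..7}" "r \<in> {1..7}" "struct_const p q r \<noteq> 0"
    then have "p \<noteq> q" using struct_const_antisym[of p p r] by auto
    then show "0 \<le> (2::real) ^ r - 2 ^ p - 2 ^ q"
      using power2_weight_admissible[OF pqr(1-3) struct_const_level[OF pqr]] by blast
  qed simp
  ultimately show False
    using assms by (simp add: atLeastAtMost_1_7)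
qed

lemma (in adapted_frame7) ricci_frame7_not_graded:
  assumes D: "is_derivation bracket7 D" and "t \<noteq> 0"
    and eigen: "\<And>j. j \<in> {1..7} \<Longrightarrow> D (u j) = (t * deg7 j) *\<^sub>R u j"
    and ricci_diag: "\<And>j. j \<in> {1..7} \<Longrightarrow> ricci bracket7 ip (u j) (u j) = c + t * deg7 j"
  shows False
proof -
  have "0 < (\<Sum>j\<in>{1..7}. test_weight7 j * ricci bracket7 ip (u j) (u j))"
  proof (rule weighted_ricci_pos)
    fix p q r assume pqr: "p \<in> {1..7}" "q \<in> {1..7}" "r \<in> {1..7}" "struct_const p q r \<noteq> 0"
    then have "t * deg7 r - t * deg7 p - t * deg7 q = 0"
      using struct_const_derivation_eigen[OF D eigen pqr(1-3)] by simp
    then have "deg7 r = deg7 p + deg7 q"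
      using \<open>t \<noteq> 0\<close> by (simp add: right_diff_distrib[symmetric])
    then show "0 \<le> test_weight7 r - test_weight7 p - test_weight7 q"
      using test_weight7_admissible[OF pqr(1-3) struct_const_level[OF pqr]] by blast
  qed (simp add: test_weight7_def)
  then show False
    by (simp add: ricci_diag atLeastAtMost_1_7 test_weight7_def deg7_def)
qed

theorem mainTheorem4:
  shows "\<not> einstein_nilradical bracket7"
proof
  assume "einstein_nilradical bracket7"
  then obtain ip c D where ip: "is_inner_product ip" and D: "is_derivation bracket7 D"
    and ric: "\<And>Y Z. ricci bracket7 ip Y Z = ip (c *\<^sub>R Y + D Y) Z"
    unfolding einstein_nilradical_def is_nilsoliton_def by blast
  interpret inner_product7 ip by unfold_locales (rule ip)
  obtain u where "adapted_from 1 u" using adapted_from_exists by blast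
  then interpret adapted_frame7 ip u by unfold_locales
  obtain t where eigen: "\<And>j. j \<in> {1..7} \<Longrightarrow> D (u j) = (t * deg7 j) *\<^sub>R u j"
    by (rule nilsoliton_frame_eigen[OF D ric]) auto
  have ricci_diag: "ricci bracket7 ip (u j) (u j) = c + t * deg7 j" if "j \<in> {1..7}" for j
    using that by (simp add: ric eigen ip_simps orthonormal)
  show False
  proof (cases "t = 0")
    case True
    then show False by (intro ricci_frame7_not_constant[of c]) (simp add: ricci_diag)
  next
    case False
    then show False using ricci_frame7_not_graded[OF D _ eigen ricci_diag] by blast
  qed
qed

end
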